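(* Let $n\ge3$. All roots of $\Phi_n(x)=0$ are real, and they are simple except $x=2$, which is a double root. Let $\tilde\alpha_n$ be the minimal root. If $n$ is even, then \[ \tilde\alpha_n=\alpha^{(n)}_n=2\cos\frac{n\pi}{n+1}=-2\cos\frac{\pi}{n+1}. \] If $n$ is odd, then $-2<\tilde\alpha_n<\alpha^{(n)}_n$.
   Context: $U_n$ is the Chebyshev polynomial of the second kind, $U_n(\cos\theta)=\sin((n+1)\theta)/\sin\theta$, $\tilde U_n(x)=U_n(x/2)$, and $\Phi_n(x)=((n+1)x^2-6x-4n)\tilde U_n(x)+2(x+2)\tilde U_{n-1}(x)+2(x+2)$. For $1\le l\le n$, $\alpha^{(n)}_l=2\cos\frac{l\pi}{n+1}$. *)

theory Defs
  imports "HOL-Analysis.Analysis" "HOL-Computational_Algebra.Polynomial"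
begin

fun chebU :: "nat \<Rightarrow> 'a::comm_ring_1 poly" where
  "chebU 0 = 1"
| "chebU (Suc 0) = [:0, 2:]"
| "chebU (Suc (Suc n)) = [:0, 2:] * chebU (Suc n) - chebU n"

definition chebUt :: "nat \<Rightarrow> complex poly" where
  "chebUt n = pcompose (chebU n) [:0, 1/2:]"

definition Phi :: "nat \<Rightarrow> complex poly" where
  "Phi n = [:- 4 * of_nat n, -6, of_nat n + 1:] * chebUt n
          + [:4, 2:] * chebUt (n - 1) + [:4, 2:]"

definition alpha :: "nat \<Rightarrow> nat \<Rightarrow> real" where
  "alpha n l = 2 * cos (real l * pi / real (n + 1))"

end

theory Submission
  imports Defs
begin

text \<open>Put \<open>x = 2 cos 2h\<close> with \<open>0 < h < \<pi>/2\<close>. Then the Chebyshev values are quotients of sines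
  and \<open>\<Phi>\<^sub>n(2 cos 2h) cos h = -16 sin((n+1)h) \<Psi>\<^sub>n(h)\<close> for an explicit trigonometric \<open>\<Psi>\<^sub>n\<close>.
  The zeros \<open>k\<pi>/(n+1)\<close>, \<open>1 \<le> k \<le> n/2\<close>, of the sine give \<open>\<lfloor>n/2\<rfloor>\<close> roots. At the ends of the
  cell \<open>((2j-1)\<pi>/(2(n+1)), (2j+1)\<pi>/(2(n+1)))\<close> around \<open>j\<pi>/(n+1)\<close> the function \<open>\<Psi>\<^sub>n\<close> has the
  signs \<open>\<plusminus>(-1)\<^sup>j\<close>, so it vanishes in each of the \<open>\<lceil>n/2\<rceil>\<close> cells meeting \<open>(0, \<pi>/2)\<close> (in the last
  one its value at \<open>j\<pi>/(n+1)\<close> or at \<open>\<pi>/2\<close> replaces the right end). These zeros avoid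
  \<open>j\<pi>/(n+1)\<close>: \<open>(n+2) cos\<^sup>2(j\<pi>/(n+1)) = 1\<close> would make \<open>2 cos(2j\<pi>/(n+1))\<close> a rational non-integer,
  which is impossible for a rational multiple of \<open>\<pi>\<close>: if \<open>2 cos x = P/Q\<close> in lowest terms, the Lucas
  sequence \<open>V\<^sub>i(P, Q\<^sup>2) = Q\<^sup>i 2 cos(ix)\<close> is integral and congruent to \<open>P\<^sup>i\<close> modulo \<open>Q\<close>, so
  \<open>cos(ix) = 1\<close> would force \<open>Q | P\<^sup>i\<close>. Together with the double root \<open>x = 2\<close> this gives
  \<open>n + 2\<close> roots, counted with multiplicity, of a polynomial of degree at most \<open>n + 2\<close>; so
  there are no others and all but 2 are simple. The smallest root comes from the largest \<open>h\<close>.\<close>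

lemma order_ge_2_if_double_root:
  fixes p :: "'a::{idom, semiring_char_0} poly"
  assumes "p \<noteq> 0" "poly p a = 0" "poly (pderiv p) a = 0"
  shows "order a p \<ge> 2"
proof -
  have "pderiv p \<noteq> 0"
    using assms(1,2) pderiv_iszero by force
  then have "order a (pderiv p) \<noteq> 0"
    using assms(3) order_root by blast
  then show ?thesis
    using order_pderiv[OF assms(1,2)] by simp
qed

lemma roots_eq_if_enough_roots:
  fixes p :: "'a::idom poly"
  assumes "p \<noteq> 0" "finite X" "a \<notin> X" "k > 0" "order a p \<ge> k" "degree p \<le> card X + k"
    and roots: "\<And>z. z \<in> X \<Longrightarrow> poly p z = 0"
  shows "{z. poly p z = 0} = insert a X" "order a p = k" "\<And>z. z \<in> X \<Longrightarrow> order z p = 1"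
proof -
  define Z where "Z = {z. poly p z = 0}"
  have "finite Z"
    unfolding Z_def using assms(1) by (rule poly_roots_finite)
  have pos: "order z p \<ge> 1" if "z \<in> Z" for z
    using that assms(1) by (simp add: Z_def order_gt_0_iff Suc_le_eq)
  have "poly p a = 0"
    using assms(1,4,5) order_gt_0_iff by fastforce
  then have "insert a X \<subseteq> Z"
    using roots by (auto simp: Z_def)
  have "card X \<le> (\<Sum>z\<in>X. order z p)"
    unfolding card_eq_sum by (rule sum_mono) (use pos \<open>insert a X \<subseteq> Z\<close> in blast)
  have "card (Z - insert a X) \<le> (\<Sum>z\<in>Z - insert a X. order z p)"
    unfolding card_eq_sum by (rule sum_mono) (use pos in blast)
  have "(\<Sum>z\<in>Z. order z p) = order a p + (\<Sum>z\<in>X. order z p) + (\<Sum>z\<in>Z - insert a X. order z p)"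
    using sum.subset_diff[OF \<open>insert a X \<subseteq> Z\<close> \<open>finite Z\<close>, of "\<lambda>z. order z p"] assms(2,3) by simp
  moreover have "(\<Sum>z\<in>Z. order z p) \<le> card X + k"
    using sum_order_le_degree[OF assms(1)] assms(6) by (simp add: Z_def)
  ultimately have "card (Z - insert a X) = 0" "order a p = k" "(\<Sum>z\<in>X. order z p) = card X"
    using \<open>card X \<le> _\<close> \<open>card (Z - insert a X) \<le> _\<close> assms(5) by linarith+
  then show "{z. poly p z = 0} = insert a X" "order a p = k"
    using \<open>finite Z\<close> \<open>insert a X \<subseteq> Z\<close> by (auto simp: Z_def)
  have pos_X: "1 \<le> order z p" if "z \<in> X" for z
    using that pos \<open>insert a X \<subseteq> Z\<close> by blast
  have "(\<Sum>z\<in>X. order z p - 1) = (\<Sum>z\<in>X. order z p) - (\<Sum>z\<in>X. 1)"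
    by (rule sum_subtractf_nat) (rule pos_X)
  also have "\<dots> = 0"
    using \<open>(\<Sum>z\<in>X. order z p) = card X\<close> by simp
  finally have "order z p - 1 = 0" if "z \<in> X" for z
    using that assms(2) by simp
  then show "order z p = 1" if "z \<in> X" for z
    using that pos_X by (simp add: le_antisym)
qed

lemma IVT_sign_change:
  fixes f :: "real \<Rightarrow> real"
  assumes "a < b" "continuous_on {a..b} f" "f a * f b < 0"
  obtains x where "a < x" "x < b" "f x = 0"
proof -
  have "\<exists>x. a \<le> x \<and> x \<le> b \<and> f x = 0"
  proof (cases "f a < 0")
    case True
    then show ?thesis
      using IVT'[of f a 0 b] assms by (auto simp: mult_less_0_iff)
  next
    case False
    then show ?thesis
      using IVT2'[of f b 0 a] assms by (auto simp: mult_less_0_iff)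
  qed
  then obtain x where x: "a \<le> x" "x \<le> b" "f x = 0"
    by blast
  moreover have "x \<noteq> a" "x \<noteq> b"
    using assms(3) x(3) by auto
  ultimately have "a < x" "x < b"
    by (auto simp: le_less)
  with that x(3) show ?thesis
    by blast
qed

lemma IVT_sign_change_avoiding:
  fixes f :: "real \<Rightarrow> real"
  assumes "a < c" "c < b" "continuous_on {a..b} f" "f a * f b < 0" "f c \<noteq> 0"
  obtains x where "a < x" "x < b" "x \<noteq> c" "f x = 0"
proof (cases "f a * f c < 0")
  case True
  have "continuous_on {a..c} f"
    using assms(3) by (rule continuous_on_subset) (use assms(2) in auto)
  then obtain x where "a < x" "x < c" "f x = 0"
    using IVT_sign_change[OF assms(1) _ True] by blast
  then show ?thesis
    using assms(2) by (intro that[of x]) auto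
next
  case False
  have "(f a * f c) * (f c * f b) = (f c)\<^sup>2 * (f a * f b)"
    by (simp add: power2_eq_square ac_simps)
  also have "\<dots> < 0"
    by (rule mult_pos_neg) (use assms(4,5) in auto)
  finally have "(f a * f c) * (f c * f b) < 0" .
  moreover have "f a * f c > 0"
    using False assms(4,5) by (auto simp: mult_less_0_iff zero_less_mult_iff)
  ultimately have "f c * f b < 0"
    using mult_nonneg_nonneg[of "f a * f c" "f c * f b"] by linarith
  moreover have "continuous_on {c..b} f"
    using assms(3) by (rule continuous_on_subset) (use assms(1) in auto)
  ultimately obtain x where "c < x" "x < b" "f x = 0"
    using IVT_sign_change[OF assms(2)] by blast
  then show ?thesis
    using assms(1) by (intro that[of x]) auto
qed

lemma sin_neq_0_near_multiple:
  assumes "y \<noteq> real j * pi" "\<bar>y - real j * pi\<bar> < pi"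
  shows "sin y \<noteq> 0"
proof
  assume "sin y = 0"
  then have "sin (y - real j * pi) = 0"
    by (simp add: sin_diff)
  moreover have "- pi < y - real j * pi" "y - real j * pi < pi"
    using assms(2) by (simp_all add: abs_less_iff)
  ultimately have "y - real j * pi = 0"
    using sin_eq_0_pi by blast
  then show False
    using assms(1) by simp
qed

lemma sin_small_angle_square_bound:
  assumes "n \<ge> 4"
  shows "(real n + 2) * (sin (pi / (2 * (real n + 1))))\<^sup>2 < 1"
proof -
  define t where "t = pi / (2 * (real n + 1))"
  have "0 < t" "t \<le> pi"
    by (simp_all add: t_def add_pos_nonneg divide_le_eq)
  then have "0 \<le> sin t"
    by (intro sin_ge_zero) simp_all
  moreover have "sin t < 2 / (real n + 1)"
  proof -
    have "sin t \<le> t"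
      using \<open>0 < t\<close> by (intro sin_x_le_x) simp
    also have "t < 2 / (real n + 1)"
      using mult_strict_right_mono[OF pi_less_4, of "real n + 1"] by (simp add: t_def divide_simps algebra_simps)
    finally show ?thesis .
  qed
  ultimately have "(sin t)\<^sup>2 < (2 / (real n + 1))\<^sup>2"
    by (intro power_strict_mono) auto
  then have "(real n + 2) * (sin t)\<^sup>2 < (real n + 2) * (4 / (real n + 1)\<^sup>2)"
    by (intro mult_strict_left_mono) (simp_all add: power_divide)
  also have "\<dots> \<le> 1"
  proof -
    have "(real n + 2) * 4 \<le> (real n + 2) * real n"
      using assms by (intro mult_left_mono) simp_all
    moreover have "(real n + 1)\<^sup>2 = (real n + 2) * real n + 1"
      by (simp add: power2_eq_square algebra_simps)
    ultimately show ?thesis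
      by (simp add: field_simps)
  qed
  finally show ?thesis
    by (simp add: t_def)
qed

fun lucasV :: "int \<Rightarrow> int \<Rightarrow> nat \<Rightarrow> int" where
  "lucasV P R 0 = 2"
| "lucasV P R (Suc 0) = P"
| "lucasV P R (Suc (Suc i)) = P * lucasV P R (Suc i) - R * lucasV P R i"

lemma lucasV_cos:
  assumes "of_int Q * (2 * cos x) = of_int P"
  shows "of_int (lucasV P (Q\<^sup>2) i) = of_int Q ^ i * (2 * cos (real i * x))"
proof -
  define V where "V i = of_int Q ^ i * (2 * cos (real i * x))" for i
  have "V (Suc (Suc i)) = of_int P * V (Suc i) - of_int Q ^ 2 * V i" for i
  proof -
    have rec: "cos (real (Suc (Suc i)) * x) = 2 * cos x * cos (real (Suc i) * x) - cos (real i * x)"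
      using cos_add[of "real (Suc i) * x" x] cos_diff[of "real (Suc i) * x" x] by (simp add: algebra_simps)
    show ?thesis
      unfolding V_def rec assms[symmetric] by (simp add: algebra_simps power2_eq_square)
  qed
  then have "of_int (lucasV P (Q\<^sup>2) i) = V i \<and> of_int (lucasV P (Q\<^sup>2) (Suc i)) = V (Suc i)"
    by (induction i) (simp_all add: V_def assms[symmetric])
  then show ?thesis
    unfolding V_def by simp
qed

lemma dvd_lucasV_minus_power:
  assumes "Q dvd R" "i \<ge> 1"
  shows "Q dvd lucasV P R i - P ^ i"
  using assms
proof (induction P R i rule: lucasV.induct)
  case (3 P R i)
  have "Q dvd lucasV P R (Suc i) - P ^ Suc i"
    using 3 by (cases i) simp_all
  then have "Q dvd P * (lucasV P R (Suc i) - P ^ Suc i) - R * lucasV P R i"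
    using dvd_mult2[OF \<open>Q dvd R\<close>] by (rule dvd_diff[OF dvd_mult])
  moreover have "lucasV P R (Suc (Suc i)) - P ^ Suc (Suc i)
      = P * (lucasV P R (Suc i) - P ^ Suc i) - R * lucasV P R i"
    by (simp add: algebra_simps)
  ultimately show ?case
    by argo
qed simp_all

lemma cos_nat_mult_neq_1:
  assumes "2 * cos x \<in> \<rat>" "2 * cos x \<notin> \<int>" "M \<ge> 1"
  shows "cos (real M * x) \<noteq> 1"
proof
  assume cos_Mx: "cos (real M * x) = 1"
  obtain P Q :: int where "Q > 0" "coprime P Q" and P_Q: "2 * cos x = of_int P / of_int Q"
    using Rats_cases'[OF assms(1)] by metis
  then have Q_cos: "of_int Q * (2 * cos x) = of_int P"
    by simp
  have "Q \<noteq> 1"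
    using assms(2) P_Q by auto
  have "of_int (lucasV P (Q\<^sup>2) M) = (of_int (2 * Q ^ M) :: real)"
    using lucasV_cos[OF Q_cos, of M] cos_Mx by simp
  then have "Q dvd lucasV P (Q\<^sup>2) M"
    using assms(3) by (metis of_int_eq_iff dvd_mult dvd_power not_one_le_zero neq0_conv)
  then have "Q dvd P ^ M"
    using dvd_lucasV_minus_power[of Q "Q\<^sup>2" M P] assms(3)
    by (metis dvd_diff_right_iff dvd_power zero_less_numeral)
  then have "is_unit Q"
    using \<open>coprime P Q\<close> by (metis coprime_commute coprime_power_right_iff coprime_absorb_right)
  then show False
    using \<open>Q > 0\<close> \<open>Q \<noteq> 1\<close> by simp
qed

lemma cos_pi_ratio_square_neq:
  assumes "m \<ge> 4"
  shows "(real m + 1) * (cos (real j * pi / real m))\<^sup>2 \<noteq> 1"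
proof
  define y where "y = real j * pi / real m"
  assume "(real m + 1) * (cos y)\<^sup>2 = 1"
  then have "(cos y)\<^sup>2 = 1 / (real m + 1)"
    by (simp add: field_simps)
  then have cos_2y: "2 * cos (2 * y) = 4 / (real m + 1) - 2"
    by (simp add: cos_double_cos)
  have "2 * cos (2 * y) \<notin> \<int>"
  proof
    assume "2 * cos (2 * y) \<in> \<int>"
    then obtain k where k: "4 / (real m + 1) - 2 = of_int k"
      unfolding cos_2y by (elim Ints_cases)
    have "- 2 < 4 / (real m + 1) - 2" "4 / (real m + 1) - 2 < - 1"
      using assms by (simp_all add: field_simps)
    then have "- 2 < k" "k < - 1"
      unfolding k by simp_all
    then show False
      by simp
  qed
  moreover have "2 * cos (2 * y) \<in> \<rat>"
    unfolding cos_2y by simp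
  moreover have "cos (real m * (2 * y)) = 1"
    using assms cos_2npi[of j] by (simp add: y_def ac_simps)
  ultimately show False
    using cos_nat_mult_neq_1[of "2 * y" m] assms by simp
qed

lemma poly_chebU_of_real:
  "poly (chebU n) (of_real y :: 'a::{real_algebra_1, comm_ring_1}) = of_real (poly (chebU n) y)"
  by (induction n rule: chebU.induct) auto

lemma poly_chebU_one: "poly (chebU n :: 'a::comm_ring_1 poly) 1 = of_nat (Suc n)"
  by (induction n rule: chebU.induct) (auto simp: algebra_simps)

lemma poly_chebU_minus_one: "poly (chebU n :: 'a::comm_ring_1 poly) (- 1) = (- 1) ^ n * of_nat (Suc n)"
proof (induction n rule: chebU.induct)
  case (3 n)
  then show ?case by (simp only: chebU.simps poly_diff poly_mult) (simp add: algebra_simps)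
qed simp_all

lemma poly_pderiv_chebU_one:
  "3 * poly (pderiv (chebU n :: 'a::idom poly)) 1 = of_nat (n * Suc n * (n + 2))"
  by (induction n rule: chebU.induct)
    (auto simp: algebra_simps pderiv_mult pderiv_diff pderiv_pCons pderiv_smult poly_chebU_one)

lemma degree_chebU_le: "degree (chebU n :: 'a::comm_ring_1 poly) \<le> n"
proof (induction n rule: chebU.induct)
  case (3 n)
  have "degree ([:0, 2:] * chebU (Suc n) :: 'a poly) \<le> Suc (Suc n)"
    by (rule order.trans[OF degree_mult_le]) (use 3 in \<open>auto intro: order.trans[OF degree_pCons_le]\<close>)
  then show ?case using 3 by (simp add: degree_diff_le)
qed (auto simp: degree_pCons_le)

lemma sin_mult_poly_chebU_cos: "sin t * poly (chebU n) (cos t) = sin (real (Suc n) * t)"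
proof (induction n rule: chebU.induct)
  case (3 n)
  define a where "a = real (Suc (Suc n)) * t"
  have "sin t * poly (chebU (Suc (Suc n))) (cos t) = 2 * cos t * sin a - sin (a - t)"
    using 3 by (simp add: a_def algebra_simps)
  also have "\<dots> = sin (a + t)"
    by (simp add: sin_add sin_diff)
  finally show ?case by (simp add: a_def algebra_simps)
qed (simp_all add: sin_double)

definition Phi_real :: "nat \<Rightarrow> real \<Rightarrow> real" where
  "Phi_real n x = ((real n + 1) * x\<^sup>2 - 6 * x - 4 * real n) * poly (chebU n) (x / 2)
     + 2 * (x + 2) * poly (chebU (n - 1)) (x / 2) + 2 * (x + 2)"

lemma poly_chebUt_of_real: "poly (chebUt n) (of_real x) = of_real (poly (chebU n) (x / 2))"
  by (simp add: chebUt_def poly_pcompose flip: poly_chebU_of_real)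

lemma poly_Phi_of_real: "poly (Phi n) (of_real x) = of_real (Phi_real n x)"
  by (simp add: Phi_def Phi_real_def poly_chebUt_of_real) (simp add: algebra_simps power2_eq_square)

lemma degree_Phi_le: "degree (Phi n) \<le> n + 2"
proof -
  have deg2: "degree [:a, b, c:] \<le> 2" and deg1: "degree [:a, b:] \<le> 1" for a b c :: complex
    by (simp_all add: degree_pCons_le)
  have degU: "degree (chebUt m) \<le> m" for m
    by (simp add: chebUt_def degree_pcompose degree_chebU_le)
  have "degree ([:- 4 * of_nat n, -6, of_nat n + 1:] * chebUt n) \<le> n + 2"
    using degree_mult_le[of "[:- 4 * of_nat n, -6, of_nat n + 1:]" "chebUt n"]
      deg2[of "- 4 * of_nat n" "-6" "of_nat n + 1"] degU[of n]
    by linarith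
  moreover have "degree ([:4, 2:] * chebUt (n - 1)) \<le> n + 2"
    using degree_mult_le[of "[:4, 2:]" "chebUt (n - 1)"] deg1[of 4 2] degU[of "n - 1"] by linarith
  moreover have "degree ([:4, 2:] :: complex poly) \<le> n + 2"
    using deg1 by (rule order.trans) simp
  ultimately show ?thesis
    unfolding Phi_def by (intro degree_add_le)
qed

lemma poly_Phi_minus_two: "poly (Phi n) (- 2) = 16 * (- 1) ^ n * of_nat (Suc n)"
  by (simp add: Phi_def chebUt_def poly_pcompose poly_chebU_minus_one algebra_simps)

lemma Phi_nonzero: "Phi n \<noteq> 0"
proof -
  have "poly (Phi n) (- 2) \<noteq> 0"
    unfolding poly_Phi_minus_two by (simp only: mult_eq_0_iff of_nat_eq_0_iff power_eq_0_iff) simp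
  then show ?thesis
    by auto
qed

lemma poly_Phi_two: "n \<ge> 1 \<Longrightarrow> poly (Phi n) 2 = 0"
  by (cases n) (simp_all add: Phi_def chebUt_def poly_pcompose poly_chebU_one algebra_simps)

lemma poly_pderiv_Phi_two:
  assumes "n \<ge> 1"
  shows "poly (pderiv (Phi n)) 2 = 0"
proof -
  have U2: "poly (chebUt m) 2 = of_nat (Suc m)" for m
    by (simp add: chebUt_def poly_pcompose poly_chebU_one)
  have dU2: "poly (pderiv (chebUt m)) 2 = of_nat (m * Suc m * (m + 2)) / 6" for m
    using poly_pderiv_chebU_one[of m, where 'a = complex]
    by (simp add: chebUt_def pderiv_pcompose poly_pcompose pderiv_pCons field_simps)
  show ?thesis
    using assms
    by (cases n)
      (simp_all add: Phi_def pderiv_mult pderiv_add pderiv_diff pderiv_pCons pderiv_smult U2 dU2,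
        simp add: field_simps)
qed

lemma order_Phi_two_ge: "n \<ge> 1 \<Longrightarrow> order 2 (Phi n) \<ge> 2"
  by (intro order_ge_2_if_double_root Phi_nonzero poly_Phi_two poly_pderiv_Phi_two)

lemma alpha_last: "alpha n n = - 2 * cos (pi / real (n + 1))"
proof -
  have "real n * pi / real (n + 1) = pi - pi / real (n + 1)"
    by (simp add: field_simps)
  then show ?thesis
    by (simp add: alpha_def cos_diff)
qed

definition Psi :: "nat \<Rightarrow> real \<Rightarrow> real" where
  "Psi n h = ((real n + 2) * cos h ^ 2 - 1) * sin h * cos ((real n + 1) * h)
     - cos h ^ 3 * sin ((real n + 1) * h)"

lemma Phi_real_cos_double:
  assumes "n \<ge> 1" "sin (2 * h) \<noteq> 0"
  shows "Phi_real n (2 * cos (2 * h)) * cos h = - 16 * sin ((real n + 1) * h) * Psi n h"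
proof -
  define s c S C where "s = sin h" and "c = cos h"
    and "S = sin ((real n + 1) * h)" and "C = cos ((real n + 1) * h)"
  define U V where "U = poly (chebU n) (cos (2 * h))" and "V = poly (chebU (n - 1)) (cos (2 * h))"
  have sc: "s\<^sup>2 = 1 - c\<^sup>2"
    by (simp add: s_def c_def sin_squared_eq)
  have sin2: "sin (2 * h) = 2 * s * c" and cos2: "cos (2 * h) = 2 * c\<^sup>2 - 1"
    by (simp_all add: s_def c_def sin_double cos_double_cos)
  have "sin (2 * h) * U = sin (2 * ((real n + 1) * h))"
    using sin_mult_poly_chebU_cos[of "2 * h" n] by (simp add: U_def algebra_simps)
  then have U: "s * c * U = S * C"
    by (simp add: sin_double s_def c_def S_def C_def)
  have "real (Suc (n - 1)) * (2 * h) = 2 * ((real n + 1) * h) - 2 * h"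
    using assms(1) by (simp add: of_nat_diff algebra_simps)
  then have "sin (2 * h) * V = sin (2 * ((real n + 1) * h) - 2 * h)"
    unfolding V_def by (metis sin_mult_poly_chebU_cos)
  also have "\<dots> = 2 * S * C * cos (2 * h) - (1 - 2 * S\<^sup>2) * sin (2 * h)"
    by (simp only: sin_diff sin_double cos_double_sin S_def C_def)
  finally have V: "s * c * V = S * C * (2 * c\<^sup>2 - 1) - (1 - 2 * S\<^sup>2) * s * c"
    unfolding sin2 cos2 by algebra
  have "Phi_real n (2 * cos (2 * h)) = ((real n + 1) * (2 * cos (2 * h))\<^sup>2 - 12 * cos (2 * h) - 4 * real n) * U
      + 4 * (cos (2 * h) + 1) * V + 4 * (cos (2 * h) + 1)"
    by (simp add: Phi_real_def U_def V_def algebra_simps)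
  then have "s * c * (Phi_real n (2 * cos (2 * h)) * cos h) = s * c * (- 16 * S * Psi n h)"
    unfolding Psi_def cos2 S_def[symmetric] C_def[symmetric] s_def[symmetric] c_def[symmetric]
    using U V sc by algebra
  moreover have "s * c \<noteq> 0"
    using assms(2) sin2 by simp
  ultimately show ?thesis
    unfolding S_def by (metis mult_left_cancel)
qed

lemma Phi_real_root_iff:
  assumes "n \<ge> 1" "0 < h" "h < pi / 2"
  shows "Phi_real n (2 * cos (2 * h)) = 0 \<longleftrightarrow> sin ((real n + 1) * h) = 0 \<or> Psi n h = 0"
proof -
  have "sin (2 * h) > 0" "cos h > 0"
    using assms by (auto intro: sin_gt_zero cos_gt_zero)
  then show ?thesis
    using Phi_real_cos_double[OF assms(1), of h] by auto
qed

lemma Psi_at_multiple_minus_half: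
  "(real n + 1) * h = real j * pi - pi / 2 \<Longrightarrow> Psi n h = (- 1) ^ j * cos h ^ 3"
  by (simp add: Psi_def sin_diff cos_diff)

lemma Psi_at_multiple_plus_half:
  "(real n + 1) * h = real j * pi + pi / 2 \<Longrightarrow> Psi n h = - ((- 1) ^ j * cos h ^ 3)"
  by (simp add: Psi_def sin_add cos_add)

lemma Psi_at_multiple:
  "(real n + 1) * h = real j * pi \<Longrightarrow> Psi n h = (- 1) ^ j * ((real n + 2) * cos h ^ 2 - 1) * sin h"
  by (simp add: Psi_def)

lemma continuous_on_Psi: "continuous_on S (Psi n)"
  unfolding Psi_def by (intro continuous_intros)

lemma Psi_cell_left_end:
  assumes "j \<ge> 1" "2 * j \<le> n + 1"
  defines "a \<equiv> (2 * real j - 1) * pi / (2 * (real n + 1))"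
  shows "0 < a" "a < pi / 2" "Psi n a = (- 1) ^ j * cos a ^ 3" "(- 1) ^ j * Psi n a > 0"
proof -
  show "0 < a"
    using assms(1) by (simp add: a_def)
  have "2 * real j \<le> real n + 1"
    using assms(2) by linarith
  then have "(2 * real j - 1) * pi < (real n + 1) * pi"
    by (intro mult_strict_right_mono) auto
  then show "a < pi / 2"
    by (simp add: a_def field_simps)
  then have "cos a > 0"
    using \<open>0 < a\<close> by (intro cos_gt_zero) auto
  show Psi_a: "Psi n a = (- 1) ^ j * cos a ^ 3"
    by (rule Psi_at_multiple_minus_half) (simp add: a_def field_simps)
  show "(- 1) ^ j * Psi n a > 0"
    using \<open>cos a > 0\<close> by (simp add: Psi_a flip: mult.assoc power_mult_distrib)
qed

lemma Psi_zero_in_inner_cell: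
  assumes "n \<ge> 3" "j \<ge> 1" "2 * j + 1 \<le> n"
  defines "a \<equiv> (2 * real j - 1) * pi / (2 * (real n + 1))"
    and "b \<equiv> (2 * real j + 1) * pi / (2 * (real n + 1))"
    and "c \<equiv> real j * pi / (real n + 1)"
  obtains r where "a < r" "r < b" "r \<noteq> c" "r < pi / 2" "Psi n r = 0"
proof -
  have "a < c" "c < b"
    by (simp_all add: a_def b_def c_def field_simps add_pos_nonneg)
  have "2 * real j + 1 < real n + 1"
    using assms(3) by linarith
  then have "(2 * real j + 1) * pi < (real n + 1) * pi"
    by (intro mult_strict_right_mono) auto
  then have "b < pi / 2"
    by (simp add: b_def field_simps)
  moreover have "0 < c"
    using assms(2) by (simp add: c_def)
  ultimately have "cos b > 0" "sin c > 0"
    using \<open>c < b\<close> by (auto intro!: cos_gt_zero sin_gt_zero)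
  have Psi_b: "Psi n b = - ((- 1) ^ j * cos b ^ 3)"
    by (rule Psi_at_multiple_plus_half) (simp add: b_def field_simps)
  have "Psi n a * Psi n b = ((- 1) ^ j * Psi n a) * ((- 1) ^ j * Psi n b)"
    by (simp add: ac_simps flip: power_mult_distrib)
  also have "\<dots> < 0"
  proof (rule mult_pos_neg)
    show "(- 1) ^ j * Psi n a > 0"
      using Psi_cell_left_end(4)[OF assms(2)] assms(3) unfolding a_def by simp
    show "(- 1) ^ j * Psi n b < 0"
      using \<open>cos b > 0\<close> by (simp add: Psi_b flip: mult.assoc power_mult_distrib)
  qed
  finally have "Psi n a * Psi n b < 0" .
  have "(real (n + 1) + 1) * (cos (real j * pi / real (n + 1)))\<^sup>2 \<noteq> 1"
    using assms(1) by (intro cos_pi_ratio_square_neq) simp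
  then have "(real n + 2) * cos c ^ 2 - 1 \<noteq> 0"
    by (simp add: c_def add.commute)
  then have "Psi n c \<noteq> 0"
    using \<open>sin c > 0\<close> by (subst Psi_at_multiple) (simp_all add: c_def)
  then obtain r where "a < r" "r < b" "r \<noteq> c" "Psi n r = 0"
    using IVT_sign_change_avoiding[OF \<open>a < c\<close> \<open>c < b\<close> continuous_on_Psi \<open>Psi n a * Psi n b < 0\<close>]
    by blast
  with \<open>b < pi / 2\<close> show ?thesis
    using that by simp
qed

lemma Psi_zero_in_middle_cell:
  assumes "n \<ge> 3" "2 * j = n"
  defines "a \<equiv> (2 * real j - 1) * pi / (2 * (real n + 1))"
    and "c \<equiv> real j * pi / (real n + 1)"
  obtains r where "a < r" "r < c" "Psi n r = 0"
proof (rule IVT_sign_change)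
  have "n \<ge> 4" "j \<ge> 1"
    using assms(1,2) by presburger+
  show "a < c"
    by (simp add: a_def c_def field_simps add_pos_nonneg)
  have "real n = 2 * real j"
    unfolding assms(2)[symmetric] by simp
  then have c_eq: "c = pi / 2 - pi / (2 * (real n + 1))"
    by (simp add: c_def field_simps)
  have "0 < c"
    using \<open>j \<ge> 1\<close> by (simp add: c_def)
  have "c < pi / 2"
    unfolding c_eq by (simp add: add_pos_nonneg)
  with \<open>0 < c\<close> have "sin c > 0"
    by (intro sin_gt_zero) simp_all
  have "(real n + 2) * (cos c)\<^sup>2 < 1"
    using sin_small_angle_square_bound[OF \<open>n \<ge> 4\<close>] by (simp add: c_eq cos_diff)
  then have "(- 1) ^ j * Psi n c < 0"
    using \<open>sin c > 0\<close> by (subst Psi_at_multiple[of n c j])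
      (simp_all add: c_def mult_neg_pos flip: mult.assoc power_mult_distrib)
  have "Psi n a * Psi n c = ((- 1) ^ j * Psi n a) * ((- 1) ^ j * Psi n c)"
    by (simp add: ac_simps flip: power_mult_distrib)
  also have "\<dots> < 0"
  proof (rule mult_pos_neg)
    show "(- 1) ^ j * Psi n a > 0"
      using Psi_cell_left_end(4)[OF \<open>j \<ge> 1\<close>] assms(2) unfolding a_def by simp
  qed fact
  finally show "Psi n a * Psi n c < 0" .
  show "continuous_on {a..c} (Psi n)"
    by (rule continuous_on_Psi)
qed (use that in blast)

lemma Psi_zero_in_last_cell:
  assumes "2 * j = n + 1"
  defines "a \<equiv> (2 * real j - 1) * pi / (2 * (real n + 1))"
  obtains r where "a < r" "r < pi / 2" "Psi n r = 0"
proof (rule IVT_sign_change)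
  have "j \<ge> 1"
    using assms(1) by presburger
  then show "a < pi / 2"
    using Psi_cell_left_end assms(1) unfolding a_def by simp
  have "real n + 1 = 2 * real j"
    using arg_cong[OF assms(1), of real] by simp
  then have "(real n + 1) * (pi / 2) = real j * pi"
    by simp
  then have "Psi n (pi / 2) = - ((- 1) ^ j)"
    by (subst Psi_at_multiple) simp_all
  then show "Psi n a * Psi n (pi / 2) < 0"
    using Psi_cell_left_end \<open>j \<ge> 1\<close> assms(1) unfolding a_def
    by (simp add: ac_simps flip: power_mult_distrib)
  show "continuous_on {a..pi / 2} (Psi n)"
    by (rule continuous_on_Psi)
qed (use that in blast)

lemma Psi_zero_in_cell:
  assumes "n \<ge> 3" "j \<ge> 1" "2 * j \<le> n + 1"
  defines "a \<equiv> (2 * real j - 1) * pi / (2 * (real n + 1))"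
    and "b \<equiv> (2 * real j + 1) * pi / (2 * (real n + 1))"
  obtains r where "a < r" "r < b" "r < pi / 2" "Psi n r = 0" "sin ((real n + 1) * r) \<noteq> 0"
    "2 * j \<le> n \<Longrightarrow> r < real n * pi / (2 * (real n + 1))"
proof -
  define c where "c = real j * pi / (real n + 1)"
  have "a < c" "c < b"
    by (simp_all add: a_def b_def c_def field_simps add_pos_nonneg)
  obtain r where r: "a < r" "r < b" "r \<noteq> c" "r < pi / 2" "Psi n r = 0"
    "2 * j \<le> n \<Longrightarrow> r < real n * pi / (2 * (real n + 1))"
  proof -
    consider "2 * j + 1 \<le> n" | "2 * j = n" | "2 * j = n + 1"
      using assms(3) by linarith
    then show ?thesis
    proof cases
      case 1
      then have "b \<le> real n * pi / (2 * (real n + 1))"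
        unfolding b_def by (intro divide_right_mono mult_right_mono) auto
      moreover obtain r where "a < r" "r < b" "r \<noteq> c" "r < pi / 2" "Psi n r = 0"
        using Psi_zero_in_inner_cell[OF assms(1,2) 1] unfolding a_def b_def c_def by blast
      ultimately show ?thesis
        by (intro that[of r]) auto
    next
      case 2
      have c_eq: "c = real n * pi / (2 * (real n + 1))" and "c < pi / 2"
        using arg_cong[OF 2, of real] by (simp_all add: c_def field_simps)
      obtain r where "a < r" "r < c" "Psi n r = 0"
        using Psi_zero_in_middle_cell[OF assms(1) 2] unfolding a_def c_def by blast
      moreover have "r < pi / 2" "r < b"
        using \<open>r < c\<close> \<open>c < pi / 2\<close> \<open>c < b\<close> by linarith+
      moreover have "r < real n * pi / (2 * (real n + 1))"
        using \<open>r < c\<close> unfolding c_eq .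
      ultimately show ?thesis
        by (intro that[of r]) auto
    next
      case 3
      have "c = pi / 2" "pi / 2 < b"
        using arg_cong[OF 3, of real] by (simp_all add: b_def c_def field_simps)
      obtain r where "a < r" "r < pi / 2" "Psi n r = 0"
        using Psi_zero_in_last_cell[OF 3] unfolding a_def by blast
      with 3 \<open>c = pi / 2\<close> \<open>pi / 2 < b\<close> show ?thesis
        by (intro that[of r]) auto
    qed
  qed
  have "\<bar>(real n + 1) * r - real j * pi\<bar> < pi"
    using r(1,2) by (simp add: a_def b_def field_simps abs_less_iff)
  moreover have "(real n + 1) * r \<noteq> real j * pi"
    using r(3) by (simp add: c_def field_simps)
  ultimately have "sin ((real n + 1) * r) \<noteq> 0"
    by (intro sin_neq_0_near_multiple)
  with r show ?thesis
    using that by blast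
qed

lemma Phi_real_roots_off_sine_zeros:
  assumes "n \<ge> 3"
  defines "h\<^sub>0 \<equiv> real n * pi / (2 * (real n + 1))"
  obtains r where "strict_mono_on {1..(n + 1) div 2} r"
    "\<And>j. j \<in> {1..(n + 1) div 2} \<Longrightarrow>
      0 < r j \<and> r j < pi / 2 \<and> Phi_real n (2 * cos (2 * r j)) = 0 \<and> sin ((real n + 1) * r j) \<noteq> 0"
    "\<And>j. j \<in> {1..n div 2} \<Longrightarrow> r j < h\<^sub>0"
    "odd n \<Longrightarrow> h\<^sub>0 < r ((n + 1) div 2)"
proof -
  define J where "J = (n + 1) div 2"
  define a b where "a j = (2 * real j - 1) * pi / (2 * (real n + 1))"
    and "b j = (2 * real j + 1) * pi / (2 * (real n + 1))" for j :: nat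
  have "\<exists>r. a j < r \<and> r < b j \<and> r < pi / 2 \<and> Psi n r = 0 \<and> sin ((real n + 1) * r) \<noteq> 0
      \<and> (2 * j \<le> n \<longrightarrow> r < h\<^sub>0)" if "j \<in> {1..J}" for j
  proof -
    have "j \<ge> 1" "2 * j \<le> n + 1"
      using that by (auto simp: J_def)
    then show ?thesis
      unfolding a_def b_def h\<^sub>0_def by (metis Psi_zero_in_cell[OF assms(1)])
  qed
  then obtain r where r: "\<And>j. j \<in> {1..J} \<Longrightarrow> a j < r j \<and> r j < b j \<and> r j < pi / 2 \<and> Psi n (r j) = 0
      \<and> sin ((real n + 1) * r j) \<noteq> 0 \<and> (2 * j \<le> n \<longrightarrow> r j < h\<^sub>0)"
    by metis
  show ?thesis
  proof (rule that)
    have "b i \<le> a j" if "i < j" for i j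
      using that by (simp add: a_def b_def divide_right_mono)
    then show "strict_mono_on {1..(n + 1) div 2} r"
      using r unfolding J_def by (intro strict_mono_onI) (meson order_less_le_trans order_less_trans)
    show "0 < r j \<and> r j < pi / 2 \<and> Phi_real n (2 * cos (2 * r j)) = 0 \<and> sin ((real n + 1) * r j) \<noteq> 0"
      if "j \<in> {1..(n + 1) div 2}" for j
    proof -
      have "0 < a j"
        using that by (simp add: a_def)
      then show ?thesis
        using r[of j] that Phi_real_root_iff[of n "r j"] assms(1) unfolding J_def by auto
    qed
    show "r j < h\<^sub>0" if "j \<in> {1..n div 2}" for j
      using r[of j] that unfolding J_def by auto
    show "h\<^sub>0 < r ((n + 1) div 2)" if "odd n"
    proof -
      have "J \<in> {1..J}" "2 * J = n + 1"
        using that assms(1) unfolding J_def by auto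
      moreover from \<open>2 * J = n + 1\<close> have "2 * real J - 1 = real n"
        by linarith
      ultimately have "h\<^sub>0 < r J"
        using r[of J] unfolding a_def h\<^sub>0_def by auto
      then show ?thesis
        by (simp add: J_def)
    qed
  qed
qed

lemma Phi_real_roots_at_sine_zeros:
  assumes "i \<in> {1..n div 2}"
  defines "h \<equiv> real i * pi / (real n + 1)"
  shows "0 < h" "h \<le> real n * pi / (2 * (real n + 1))" "h < pi / 2"
    "Phi_real n (2 * cos (2 * h)) = 0" "sin ((real n + 1) * h) = 0"
proof -
  show "0 < h" "sin ((real n + 1) * h) = 0"
    using assms(1) by (simp_all add: h_def)
  have "2 * i \<le> n"
    using assms(1) by auto
  then have "2 * real i * pi / (2 * (real n + 1)) \<le> real n * pi / (2 * (real n + 1))"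
    by (intro divide_right_mono mult_right_mono) auto
  moreover have "h = 2 * real i * pi / (2 * (real n + 1))"
    by (simp add: h_def field_simps add_pos_nonneg)
  ultimately show "h \<le> real n * pi / (2 * (real n + 1))"
    by simp
  also have "\<dots> < pi / 2"
    by (simp add: field_simps)
  finally show "h < pi / 2" .
  with \<open>0 < h\<close> \<open>sin ((real n + 1) * h) = 0\<close> show "Phi_real n (2 * cos (2 * h)) = 0"
    using assms(1) Phi_real_root_iff[of n h] by auto
qed

lemma Phi_real_trig_roots:
  assumes "n \<ge> 3"
  defines "h\<^sub>0 \<equiv> real n * pi / (2 * (real n + 1))"
  obtains H where "finite H" "card H = n"
    "\<And>h. h \<in> H \<Longrightarrow> 0 < h \<and> h < pi / 2 \<and> Phi_real n (2 * cos (2 * h)) = 0"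
    "even n \<Longrightarrow> h\<^sub>0 \<in> H \<and> (\<forall>h\<in>H. h \<le> h\<^sub>0)"
    "odd n \<Longrightarrow> \<exists>h\<in>H. h\<^sub>0 < h"
proof -
  define J K where "J = (n + 1) div 2" and "K = n div 2"
  define k where "k i = real i * pi / (real n + 1)" for i :: nat
  obtain r where "strict_mono_on {1..J} r"
    and r: "\<And>j. j \<in> {1..J} \<Longrightarrow>
      0 < r j \<and> r j < pi / 2 \<and> Phi_real n (2 * cos (2 * r j)) = 0 \<and> sin ((real n + 1) * r j) \<noteq> 0"
    and r_le: "\<And>j. j \<in> {1..K} \<Longrightarrow> r j < h\<^sub>0" and r_odd: "odd n \<Longrightarrow> h\<^sub>0 < r J"
    using Phi_real_roots_off_sine_zeros[OF assms(1)] unfolding J_def K_def h\<^sub>0_def by blast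
  note k = Phi_real_roots_at_sine_zeros[of _ n, folded k_def K_def h\<^sub>0_def]
  define H where "H = r ` {1..J} \<union> k ` {1..K}"
  have "inj_on r {1..J}"
    using \<open>strict_mono_on {1..J} r\<close> by (rule strict_mono_on_imp_inj_on)
  moreover have "inj_on k {1..K}"
    by (intro inj_onI) (simp add: k_def)
  moreover have "r ` {1..J} \<inter> k ` {1..K} = {}"
    using r k(5) by fastforce
  ultimately have "card H = n"
    by (simp add: H_def card_Un_disjoint card_image J_def K_def)
  moreover have "h\<^sub>0 \<in> H \<and> (\<forall>h\<in>H. h \<le> h\<^sub>0)" if "even n"
  proof -
    have "J = K" "2 * K = n" "K \<ge> 1"
      using that assms(1) unfolding J_def K_def by auto
    then have "real n = 2 * real K"
      by linarith
    then have "k K = h\<^sub>0"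
      by (simp add: k_def h\<^sub>0_def field_simps)
    then show ?thesis
      using k(2) r_le \<open>J = K\<close> \<open>K \<ge> 1\<close> unfolding H_def by fastforce
  qed
  moreover have "\<exists>h\<in>H. h\<^sub>0 < h" if "odd n"
    using r_odd[OF that] assms(1) unfolding H_def J_def by auto
  moreover have "0 < h \<and> h < pi / 2 \<and> Phi_real n (2 * cos (2 * h)) = 0" if "h \<in> H" for h
    using that r k(1,3,4) unfolding H_def by blast
  ultimately show ?thesis
    using that[of H] by (simp add: H_def)
qed

lemma Phi_real_roots_in_interval:
  assumes "n \<ge> 3"
  obtains X where "finite X" "card X = n" "\<And>x. x \<in> X \<Longrightarrow> - 2 < x \<and> x < 2 \<and> Phi_real n x = 0"
    "even n \<Longrightarrow> alpha n n \<in> X \<and> (\<forall>x\<in>X. alpha n n \<le> x)"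
    "odd n \<Longrightarrow> \<exists>x\<in>X. x < alpha n n"
proof -
  define h\<^sub>0 where "h\<^sub>0 = real n * pi / (2 * (real n + 1))"
  obtain H where "finite H" "card H = n"
    and H: "\<And>h. h \<in> H \<Longrightarrow> 0 < h \<and> h < pi / 2 \<and> Phi_real n (2 * cos (2 * h)) = 0"
    and even_H: "even n \<Longrightarrow> h\<^sub>0 \<in> H \<and> (\<forall>h\<in>H. h \<le> h\<^sub>0)"
    and odd_H: "odd n \<Longrightarrow> \<exists>h\<in>H. h\<^sub>0 < h"
    using Phi_real_trig_roots[OF assms] unfolding h\<^sub>0_def by blast
  define g where "g h = 2 * cos (2 * h)" for h :: real
  have "0 < h\<^sub>0" "h\<^sub>0 < pi / 2"
    using assms by (simp_all add: h\<^sub>0_def field_simps add_pos_nonneg)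
  have "real n * pi / real (n + 1) = 2 * h\<^sub>0"
    by (simp add: h\<^sub>0_def field_simps add_pos_nonneg)
  then have alpha_eq: "alpha n n = g h\<^sub>0"
    by (simp add: alpha_def g_def)
  have "inj_on g H"
  proof (rule inj_onI)
    fix h h' assume "h \<in> H" "h' \<in> H" "g h = g h'"
    have "2 * h = 2 * h'"
      by (rule cos_inj_pi)
        (use H[OF \<open>h \<in> H\<close>] H[OF \<open>h' \<in> H\<close>] \<open>g h = g h'\<close> in \<open>simp_all add: g_def\<close>)
    then show "h = h'"
      by simp
  qed
  have g_bounds: "- 2 < g h \<and> g h < 2" if "h \<in> H" for h
  proof -
    have "cos pi < cos (2 * h)" "cos (2 * h) < cos 0"
      by (rule cos_monotone_0_pi; use H[OF that] in simp)+
    then show ?thesis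
      by (simp add: g_def)
  qed
  have g_le: "g h\<^sub>0 \<le> g h" if "h \<in> H" "h \<le> h\<^sub>0" for h
    using H[OF that(1)] that(2) \<open>h\<^sub>0 < pi / 2\<close> by (simp add: g_def cos_monotone_0_pi_le)
  have g_less: "g h < g h\<^sub>0" if "h \<in> H" "h\<^sub>0 < h" for h
    using H[OF that(1)] that(2) \<open>0 < h\<^sub>0\<close> by (simp add: g_def cos_monotone_0_pi)
  show ?thesis
  proof (rule that[of "g ` H"])
    show "finite (g ` H)" "card (g ` H) = n"
      using \<open>finite H\<close> \<open>card H = n\<close> \<open>inj_on g H\<close> by (simp_all add: card_image)
    show "- 2 < x \<and> x < 2 \<and> Phi_real n x = 0" if "x \<in> g ` H" for x
      using that H g_bounds by (auto simp: g_def)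
    show "alpha n n \<in> g ` H \<and> (\<forall>x\<in>g ` H. alpha n n \<le> x)" if "even n"
      using even_H[OF that] g_le unfolding alpha_eq by auto
    show "\<exists>x\<in>g ` H. x < alpha n n" if "odd n"
      using odd_H[OF that] g_less unfolding alpha_eq by auto
  qed
qed

lemma Phi_roots:
  assumes "n \<ge> 3"
  obtains X where "finite X" "\<And>x. x \<in> X \<Longrightarrow> - 2 < x \<and> x < 2"
    "{z. poly (Phi n) z = 0} = insert 2 (of_real ` X)"
    "{x::real. poly (Phi n) (of_real x) = 0} = insert 2 X"
    "order 2 (Phi n) = 2" "\<And>x. x \<in> X \<Longrightarrow> order (of_real x) (Phi n) = 1"
    "even n \<Longrightarrow> alpha n n \<in> X \<and> (\<forall>x\<in>X. alpha n n \<le> x)"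
    "odd n \<Longrightarrow> \<exists>x\<in>X. x < alpha n n"
proof -
  obtain X where "finite X" "card X = n" and X: "\<And>x. x \<in> X \<Longrightarrow> - 2 < x \<and> x < 2 \<and> Phi_real n x = 0"
    and even_X: "even n \<Longrightarrow> alpha n n \<in> X \<and> (\<forall>x\<in>X. alpha n n \<le> x)"
    and odd_X: "odd n \<Longrightarrow> \<exists>x\<in>X. x < alpha n n"
    using Phi_real_roots_in_interval[OF assms] by blast
  define Z where "Z = (of_real ` X :: complex set)"
  have "finite Z" "card Z = n"
    using \<open>finite X\<close> \<open>card X = n\<close> by (simp_all add: Z_def card_image inj_on_def)
  have of_real_eq_2: "(complex_of_real x = 2) = (x = 2)" for x
    by (metis of_real_eq_iff of_real_numeral)
  have "2 \<notin> Z"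
    using X[of 2] by (auto simp: Z_def of_real_eq_2)
  have "poly (Phi n) z = 0" if "z \<in> Z" for z
    using that X by (auto simp: Z_def poly_Phi_of_real)
  moreover have "order 2 (Phi n) \<ge> 2"
    using assms by (intro order_Phi_two_ge) simp
  moreover have "degree (Phi n) \<le> card Z + 2"
    using degree_Phi_le[of n] \<open>card Z = n\<close> by simp
  ultimately have roots: "{z. poly (Phi n) z = 0} = insert 2 Z" and "order 2 (Phi n) = 2"
    and simple: "\<And>z. z \<in> Z \<Longrightarrow> order z (Phi n) = 1"
    using roots_eq_if_enough_roots[OF Phi_nonzero \<open>finite Z\<close> \<open>2 \<notin> Z\<close> pos2] by blast+
  have real_roots: "{x::real. poly (Phi n) (of_real x) = 0} = insert 2 X"
    using roots by (auto simp: Z_def of_real_eq_2 set_eq_iff)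
  have "order (of_real x) (Phi n) = 1" if "x \<in> X" for x
    using simple that by (simp add: Z_def)
  with X show ?thesis
    by (intro that[OF \<open>finite X\<close> _ roots[unfolded Z_def] real_roots \<open>order 2 (Phi n) = 2\<close> _ even_X odd_X])
      simp_all
qed

theorem proposition4p12:
  fixes n :: nat
  assumes "n \<ge> 3"
  shows "(\<forall>z. poly (Phi n) z = 0 \<longrightarrow> z \<in> \<real>)
       \<and> order 2 (Phi n) = 2
       \<and> (\<forall>z. poly (Phi n) z = 0 \<and> z \<noteq> 2 \<longrightarrow> order z (Phi n) = 1)
       \<and> (let a = Min {x::real. poly (Phi n) (complex_of_real x) = 0} in
            (even n \<longrightarrow> a = alpha n n \<and> alpha n n = - 2 * cos (pi / real (n + 1)))
          \<and> (odd n \<longrightarrow> - 2 < a \<and> a < alpha n n))"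
proof -
  obtain X where "finite X" and X: "\<And>x. x \<in> X \<Longrightarrow> - 2 < x \<and> x < 2"
    and roots: "{z. poly (Phi n) z = 0} = insert 2 (of_real ` X)"
    and real_roots: "{x::real. poly (Phi n) (of_real x) = 0} = insert 2 X"
    and "order 2 (Phi n) = 2" and simple: "\<And>x. x \<in> X \<Longrightarrow> order (of_real x) (Phi n) = 1"
    and even_X: "even n \<Longrightarrow> alpha n n \<in> X \<and> (\<forall>x\<in>X. alpha n n \<le> x)"
    and odd_X: "odd n \<Longrightarrow> \<exists>x\<in>X. x < alpha n n"
    using Phi_roots[OF assms] by blast
  have "\<forall>z. poly (Phi n) z = 0 \<longrightarrow> z \<in> \<real>"
    using roots by (auto simp: set_eq_iff)
  moreover have "\<forall>z. poly (Phi n) z = 0 \<and> z \<noteq> 2 \<longrightarrow> order z (Phi n) = 1"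
    using roots simple by blast
  moreover have "Min (insert 2 X) = alpha n n" if "even n"
    using \<open>finite X\<close> even_X[OF that] X[of "alpha n n"] by (intro Min_eqI) auto
  moreover have "- 2 < Min (insert 2 X) \<and> Min (insert 2 X) < alpha n n" if "odd n"
  proof -
    obtain x where "x \<in> X" "x < alpha n n"
      using odd_X[OF \<open>odd n\<close>] by blast
    moreover have "Min (insert 2 X) \<le> x"
      using \<open>finite X\<close> \<open>x \<in> X\<close> by (intro Min_le) auto
    moreover have "Min (insert 2 X) \<in> insert 2 X"
      using \<open>finite X\<close> by (intro Min_in) auto
    ultimately show ?thesis
      using X by auto
  qed
  ultimately show ?thesis
    using \<open>order 2 (Phi n) = 2\<close> alpha_last[of n] unfolding real_roots Let_def by blast
qed

end
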